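(* Let $\alpha>0$ be the fraction of perfect labelers. There is an absolute constant $C$ such that the following holds. For a finite unlabeled sample set $S\subseteq\mathcal{X}$ and $\delta>0$, consider the procedure $\textsc{Prune-and-Label}(S,\delta)$: for each $x\in S$, draw a set $L$ of $k=\lceil C\alpha^{-2}\log(|S|/\delta)\rceil$ labelers independently from $P$; if $\mathrm{Maj\text{-}size}_L(x)\le1-\frac\alpha4$, make a golden query $y^*=f^*(x)$ and prune the labelers (replace $P$ by $P$ conditioned on labelers $i$ with $\ell_i(x)=y^*$), stopping the procedure; otherwise add $(x,\mathrm{Maj}_L(x))$ to the output $\bar S$. Then with probability at least $1-\delta$, either the procedure prunes the set of labelers, or its output $\bar S$ satisfies $y=f^*(x)$ for all $(x,y)\in\bar S$.
   Context: There is an unknown target $f^*:\mathcal{X}\to\{+1,-1\}$. Labeler $i$ is a function $\ell_i:\mathcal{X}\to\{+1,-1\}$, perfect if $\ell_i$ agrees with $f^*$; non-perfect labelers are arbitrary fixed functions. $P$ is the uniform distribution over labelers and $\alpha$ is the $P$-probability that a labeler is perfect. For a set $L$ of labelers, $\mathrm{Maj}_L(x)$ is the label given to $x$ by the majority of labelers in $L$, and $\mathrm{Maj\text{-}size}_L(x)$ is the fraction of labelers in $L$ whose label on $x$ equals $\mathrm{Maj}_L(x)$. A golden query on $x$ returns $f^*(x)$. *)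

theory Defs
  imports "HOL-Probability.Probability"
begin

text \<open>The random draws of the procedure are
  encoded by a function omega :: 'x * nat => nat: omega (x, j) is the j-th labeler
  (j < k) drawn independently from P (uniform over {..<n}) for the sample point x.
  The multiset L drawn for x is thus {# omega (x, j). j < k #}.\<close>

definition frac_perfect :: "nat \<Rightarrow> (nat \<Rightarrow> 'x \<Rightarrow> int) \<Rightarrow> ('x \<Rightarrow> int) \<Rightarrow> real" where
  "frac_perfect n lab f = real (card {i. i < n \<and> lab i = f}) / real n"

definition count_lab :: "(nat \<Rightarrow> 'x \<Rightarrow> int) \<Rightarrow> ('x \<times> nat \<Rightarrow> nat) \<Rightarrow> nat \<Rightarrow> 'x \<Rightarrow> int \<Rightarrow> nat" where
  "count_lab lab \<omega> k x y = card {j. j < k \<and> lab (\<omega> (x, j)) x = y}"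

definition maj :: "(nat \<Rightarrow> 'x \<Rightarrow> int) \<Rightarrow> ('x \<times> nat \<Rightarrow> nat) \<Rightarrow> nat \<Rightarrow> 'x \<Rightarrow> int" where
  "maj lab \<omega> k x = (if count_lab lab \<omega> k x 1 \<ge> count_lab lab \<omega> k x (-1) then 1 else -1)"

text \<open>Fraction of the drawn labelers agreeing with the majority label
  (convention: 1 if no labeler was drawn).\<close>
definition maj_size :: "(nat \<Rightarrow> 'x \<Rightarrow> int) \<Rightarrow> ('x \<times> nat \<Rightarrow> nat) \<Rightarrow> nat \<Rightarrow> 'x \<Rightarrow> real" where
  "maj_size lab \<omega> k x = (if k = 0 then 1 else
     real (count_lab lab \<omega> k x (maj lab \<omega> k x)) / real k)"

text \<open>Prune-and-Label run on the sample points in the order of the list;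
  None means the procedure made a golden query and pruned (and stopped);
  Some out means it finished without pruning, with output out.\<close>
fun prune_and_label :: "(nat \<Rightarrow> 'x \<Rightarrow> int) \<Rightarrow> real \<Rightarrow> nat \<Rightarrow> ('x \<times> nat \<Rightarrow> nat) \<Rightarrow> 'x list
    \<Rightarrow> ('x \<times> int) list option" where
  "prune_and_label lab \<alpha> k \<omega> [] = Some []"
| "prune_and_label lab \<alpha> k \<omega> (x # xs) =
     (if maj_size lab \<omega> k x \<le> 1 - \<alpha> / 4 then None
      else map_option (\<lambda>out. (x, maj lab \<omega> k x) # out) (prune_and_label lab \<alpha> k \<omega> xs))"

definition draws :: "nat \<Rightarrow> 'x set \<Rightarrow> nat \<Rightarrow> ('x \<times> nat \<Rightarrow> nat) pmf" where
  "draws n S k = Pi_pmf (S \<times> {..<k}) 0 (\<lambda>_. pmf_of_set {..<n})"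

end

theory Submission
  imports Defs
begin

text \<open>Every labeler that is perfect labels x correctly, so the probability that a single
  uniform draw labels x correctly is at least \<alpha>. The number of correct draws among the k
  labelers drawn for x is therefore binomial with mean at least \<alpha> k, and by Hoeffding's
  inequality it drops to \<alpha> k / 4 only with probability exp (- 9 \<alpha>^2 k / 8) \<le> \<delta> / |S|.
  If it stays above \<alpha> k / 4 and no golden query is made, the majority holds more than a
  1 - \<alpha> / 4 fraction, so the wrong label cannot be the majority. A union bound over S
  finishes the proof.\<close>

definition frac_correct :: "nat \<Rightarrow> (nat \<Rightarrow> 'x \<Rightarrow> int) \<Rightarrow> ('x \<Rightarrow> int) \<Rightarrow> 'x \<Rightarrow> real" where
  "frac_correct n lab f x = real (card {i. i < n \<and> lab i x = f x}) / real n"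

lemma frac_correct_nonneg: "0 \<le> frac_correct n lab f x"
  by (simp add: frac_correct_def)

lemma frac_correct_le_1: "frac_correct n lab f x \<le> 1"
proof -
  have "card {i. i < n \<and> lab i x = f x} \<le> card {..<n}"
    by (rule card_mono) auto
  then show ?thesis
    by (cases "n = 0") (simp_all add: frac_correct_def)
qed

lemma frac_perfect_le_frac_correct: "frac_perfect n lab f \<le> frac_correct n lab f x"
proof -
  have "card {i. i < n \<and> lab i = f} \<le> card {i. i < n \<and> lab i x = f x}"
    by (rule card_mono) auto
  then show ?thesis
    by (simp add: frac_perfect_def frac_correct_def divide_right_mono)
qed

lemma frac_perfect_pos_imp_pos: "frac_perfect n lab f > 0 \<Longrightarrow> n > 0"
  by (cases "n = 0") (auto simp: frac_perfect_def)

lemma map_pmf_pmf_of_set_eq_bernoulli: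
  assumes "finite A" "A \<noteq> {}"
  shows "map_pmf P (pmf_of_set A) = bernoulli_pmf (real (card {a \<in> A. P a}) / real (card A))"
    (is "_ = bernoulli_pmf ?p")
proof -
  have "card {a \<in> A. P a} \<le> card A"
    using assms by (intro card_mono) auto
  moreover have "card A > 0"
    using assms by (simp add: card_gt_0_iff)
  ultimately have p01: "0 \<le> ?p" "?p \<le> 1"
    by simp_all
  have "A \<inter> P -` {True} = {a \<in> A. P a}"
    by auto
  then have true: "pmf (map_pmf P (pmf_of_set A)) True = ?p"
    using assms by (simp add: pmf_map measure_pmf_of_set)
  show ?thesis
  proof (rule pmf_eqI)
    fix b :: bool
    show "pmf (map_pmf P (pmf_of_set A)) b = pmf (bernoulli_pmf ?p) b"
      using true p01 pmf_False_conv_True[of "map_pmf P (pmf_of_set A)"] by (cases b) simp_all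
  qed
qed

text \<open>The draws for the other sample points are irrelevant: the count is a function of the
  k independent draws at x only.\<close>

lemma count_lab_distribution:
  assumes "finite S" "x \<in> S" "n > 0"
  shows "map_pmf (\<lambda>\<omega>. count_lab lab \<omega> k x (f x)) (draws n S k)
       = binomial_pmf k (frac_correct n lab f x)"
proof -
  define P where "P = (\<lambda>i. lab i x = f x)"
  define p where "p = frac_correct n lab f x"
  define A where "A = {x} \<times> {..<k}"
  have fin: "finite (S \<times> {..<k})" and AS: "A \<subseteq> S \<times> {..<k}"
    using assms by (auto simp: A_def)
  have count_eq: "count_lab lab \<omega> k x (f x) = card {a \<in> A. (P \<circ> \<omega>) a}" for \<omega>
  proof -
    have "{a \<in> A. (P \<circ> \<omega>) a} = (\<lambda>j. (x, j)) ` {j. j < k \<and> lab (\<omega> (x, j)) x = f x}"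
      by (auto simp: A_def P_def)
    then show ?thesis
      unfolding count_lab_def by (simp add: card_image inj_on_def)
  qed
  have coin: "map_pmf P (pmf_of_set {..<n}) = bernoulli_pmf p"
    using map_pmf_pmf_of_set_eq_bernoulli[of "{..<n}" P] \<open>n > 0\<close> lessThan_empty_iff[of n]
    by (simp add: p_def P_def frac_correct_def)
  have "map_pmf (\<lambda>\<omega>. count_lab lab \<omega> k x (f x)) (draws n S k)
      = map_pmf (\<lambda>g. card {a \<in> A. g a}) (map_pmf (\<lambda>h. P \<circ> h) (draws n S k))"
    by (simp add: map_pmf_comp count_eq)
  also have "map_pmf (\<lambda>h. P \<circ> h) (draws n S k) = Pi_pmf (S \<times> {..<k}) (P 0) (\<lambda>_. bernoulli_pmf p)"
    unfolding draws_def coin[symmetric] by (rule Pi_pmf_map[symmetric]) (use fin in auto)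
  also have "map_pmf (\<lambda>g. card {a \<in> A. g a}) \<dots>
      = map_pmf (\<lambda>g. card {a \<in> A. g a}) (Pi_pmf A (P 0) (\<lambda>_. bernoulli_pmf p))"
    by (subst Pi_pmf_subset[OF fin AS]) (simp add: map_pmf_comp cong: conj_cong)
  also have "\<dots> = binomial_pmf k p"
    using frac_correct_nonneg[of n lab f x] frac_correct_le_1[of n lab f x]
    by (intro binomial_pmf_altdef'[symmetric]) (auto simp: A_def p_def)
  finally show ?thesis
    by (simp add: p_def)
qed

lemma count_lab_lower_tail:
  assumes "finite S" "x \<in> S" "n > 0" "k > 0" "0 < \<alpha>" "\<alpha> \<le> frac_correct n lab f x"
  shows "measure_pmf.prob (draws n S k) {\<omega>. real (count_lab lab \<omega> k x (f x)) \<le> \<alpha> * k / 4}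
         \<le> exp (- 9 * \<alpha>\<^sup>2 * k / 8)"
proof -
  define p where "p = frac_correct n lab f x"
  interpret binomial_distribution k p
    by unfold_locales (simp add: p_def frac_correct_nonneg frac_correct_le_1)
  define \<epsilon> where "\<epsilon> = k * p - \<alpha> * k / 4"
  have \<epsilon>_ge: "3 * \<alpha> * k / 4 \<le> \<epsilon>"
    using assms by (simp add: \<epsilon>_def p_def algebra_simps mult_left_mono)
  moreover have "0 \<le> 3 * \<alpha> * k / 4"
    using assms by simp
  ultimately have "0 \<le> \<epsilon>"
    by linarith
  have "measure_pmf.prob (draws n S k) {\<omega>. real (count_lab lab \<omega> k x (f x)) \<le> \<alpha> * k / 4}
      = measure_pmf.prob (map_pmf (\<lambda>\<omega>. count_lab lab \<omega> k x (f x)) (draws n S k))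
          {c. real c \<le> k * p - \<epsilon>}"
    by (simp add: \<epsilon>_def)
  also have "\<dots> \<le> exp (-2 * \<epsilon>\<^sup>2 / k)"
    unfolding count_lab_distribution[OF assms(1-3)] p_def[symmetric]
    using \<open>k > 0\<close> \<open>0 \<le> \<epsilon>\<close> by (rule prob_le)
  also have "\<dots> \<le> exp (- 9 * \<alpha>\<^sup>2 * k / 8)"
  proof -
    have "(3 * \<alpha> * k / 4)\<^sup>2 \<le> \<epsilon>\<^sup>2"
      using \<epsilon>_ge assms by (intro power_mono) auto
    then show ?thesis
      using \<open>k > 0\<close> by (simp add: field_simps power2_eq_square)
  qed
  finally show ?thesis .
qed

text \<open>Correct and wrong votes are disjoint, so a wrong majority would hold at most a
  1 - \<alpha> / 4 fraction of the k votes.\<close>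

lemma maj_eq_if_count_lab_large:
  assumes "\<alpha> > 0" "real (count_lab lab \<omega> k x (f x)) > \<alpha> * k / 4"
    and "\<not> maj_size lab \<omega> k x \<le> 1 - \<alpha> / 4"
  shows "maj lab \<omega> k x = f x"
proof (rule ccontr)
  assume wrong: "maj lab \<omega> k x \<noteq> f x"
  define y where "y = maj lab \<omega> k x"
  have "count_lab lab \<omega> k x y + count_lab lab \<omega> k x (f x)
      = card ({j. j < k \<and> lab (\<omega> (x, j)) x = y} \<union> {j. j < k \<and> lab (\<omega> (x, j)) x = f x})"
    unfolding count_lab_def using wrong by (subst card_Un_disjoint) (auto simp: y_def)
  also have "\<dots> \<le> card {..<k}"
    by (rule card_mono) auto
  finally have votes: "count_lab lab \<omega> k x y + count_lab lab \<omega> k x (f x) \<le> k"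
    by simp
  have "0 \<le> \<alpha> * k / 4"
    using assms by simp
  with assms(2) votes have "k > 0"
    by linarith
  have "maj_size lab \<omega> k x = real (count_lab lab \<omega> k x y) / k"
    using \<open>k > 0\<close> by (simp add: maj_size_def y_def)
  also have "\<dots> \<le> (k - real (count_lab lab \<omega> k x (f x))) / k"
    using votes \<open>k > 0\<close> by (intro divide_right_mono) auto
  also have "\<dots> \<le> 1 - \<alpha> / 4"
    using assms(2) \<open>k > 0\<close> by (simp add: field_simps)
  finally show False
    using assms(3) by simp
qed

lemma prune_and_label_correct_if_counts_large:
  assumes "\<alpha> > 0" "\<forall>x\<in>set xs. real (count_lab lab \<omega> k x (f x)) > \<alpha> * k / 4"
  shows "case prune_and_label lab \<alpha> k \<omega> xs of
           None \<Rightarrow> True | Some out \<Rightarrow> (\<forall>(x, y)\<in>set out. y = f x)"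
  using assms(2)
proof (induction xs)
  case Nil
  then show ?case by simp
next
  case (Cons x xs)
  show ?case
  proof (cases "maj_size lab \<omega> k x \<le> 1 - \<alpha> / 4")
    case True
    then show ?thesis by simp
  next
    case False
    with Cons.prems have "maj lab \<omega> k x = f x"
      by (intro maj_eq_if_count_lab_large[OF assms(1)]) simp_all
    with False Cons.IH Cons.prems show ?thesis
      by (auto split: option.splits)
  qed
qed

lemma prune_and_label_correct_prob:
  assumes "distinct xs" "n > 0" "k > 0" "0 < \<alpha>"
    and "\<forall>x\<in>set xs. \<alpha> \<le> frac_correct n lab f x"
    and "real (length xs) * exp (- \<alpha>\<^sup>2 * k) \<le> \<delta>"
  shows "1 - \<delta> \<le> measure_pmf.prob (draws n (set xs) k)
           {\<omega>. case prune_and_label lab \<alpha> k \<omega> xs of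
                  None \<Rightarrow> True | Some out \<Rightarrow> (\<forall>(x, y) \<in> set out. y = f x)}"
    (is "_ \<le> measure_pmf.prob ?D ?G")
proof -
  define E where "E x = {\<omega>. real (count_lab lab \<omega> k x (f x)) \<le> \<alpha> * k / 4}" for x
  have good: "UNIV - (\<Union>x\<in>set xs. E x) \<subseteq> ?G"
    using prune_and_label_correct_if_counts_large[OF \<open>0 < \<alpha>\<close>] by (force simp: E_def not_le)
  have tail: "measure_pmf.prob ?D (E x) \<le> exp (- \<alpha>\<^sup>2 * k)" if "x \<in> set xs" for x
  proof -
    have "measure_pmf.prob ?D (E x) \<le> exp (- 9 * \<alpha>\<^sup>2 * k / 8)"
      unfolding E_def using assms that by (intro count_lab_lower_tail) auto
    also have "\<dots> \<le> exp (- \<alpha>\<^sup>2 * k)"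
      by simp
    finally show ?thesis .
  qed
  have "measure_pmf.prob ?D (\<Union>x\<in>set xs. E x) \<le> (\<Sum>x\<in>set xs. measure_pmf.prob ?D (E x))"
    by (rule measure_pmf.finite_measure_subadditive_finite) auto
  also have "\<dots> \<le> (\<Sum>x\<in>set xs. exp (- \<alpha>\<^sup>2 * k))"
    by (intro sum_mono tail)
  also have "\<dots> \<le> \<delta>"
    using assms by (simp add: distinct_card)
  finally have "1 - \<delta> \<le> measure_pmf.prob ?D (UNIV - (\<Union>x\<in>set xs. E x))"
    by (subst measure_pmf.prob_compl[simplified]) auto
  also have "\<dots> \<le> measure_pmf.prob ?D ?G"
    using good by (intro measure_pmf.finite_measure_mono) simp_all
  finally show ?thesis .
qed

lemma sample_size_sufficient:
  assumes "0 < \<alpha>" "0 < \<delta>" "\<delta> < 1" "1 \<le> m"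
  defines "k \<equiv> nat \<lceil>\<alpha> powr (-2) * ln (real m / \<delta>)\<rceil>"
  shows "0 < k" and "real m * exp (- \<alpha>\<^sup>2 * k) \<le> \<delta>"
proof -
  have "1 < real m / \<delta>"
    using assms by (simp add: field_simps)
  then have "0 < ln (real m / \<delta>)"
    by simp
  have "\<alpha> powr (-2) * ln (real m / \<delta>) = ln (real m / \<delta>) / \<alpha>\<^sup>2"
    using assms by (simp add: powr_minus powr_realpow divide_inverse)
  then have k_ge: "ln (real m / \<delta>) / \<alpha>\<^sup>2 \<le> real k"
    unfolding k_def by linarith
  moreover have "0 < ln (real m / \<delta>) / \<alpha>\<^sup>2"
    using \<open>0 < ln (real m / \<delta>)\<close> assms by simp
  ultimately show "0 < k"
    by linarith
  have "ln (real m / \<delta>) \<le> \<alpha>\<^sup>2 * k"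
    using k_ge assms by (simp add: field_simps)
  then have "exp (- \<alpha>\<^sup>2 * k) \<le> exp (- ln (real m / \<delta>))"
    by simp
  also have "\<dots> = \<delta> / real m"
    using assms \<open>1 < real m / \<delta>\<close> by (simp add: exp_minus)
  finally show "real m * exp (- \<alpha>\<^sup>2 * k) \<le> \<delta>"
    using assms by (simp add: field_simps)
qed

theorem lemma10:
  "\<exists>C::real. C > 0 \<and>
     (\<forall>(n::nat) (lab :: nat \<Rightarrow> 'x \<Rightarrow> int) (f :: 'x \<Rightarrow> int) (xs :: 'x list) (\<delta>::real).
        (\<forall>x. f x \<in> {1, -1}) \<longrightarrow> (\<forall>i x. lab i x \<in> {1, -1}) \<longrightarrow>
        frac_perfect n lab f > 0 \<longrightarrow> distinct xs \<longrightarrow> \<delta> > 0 \<longrightarrow>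
        (let \<alpha> = frac_perfect n lab f;
             k = nat \<lceil>C * \<alpha> powr (-2) * ln (real (length xs) / \<delta>)\<rceil>
         in measure_pmf.prob (draws n (set xs) k)
              {\<omega>. case prune_and_label lab \<alpha> k \<omega> xs of
                     None \<Rightarrow> True
                   | Some out \<Rightarrow> (\<forall>(x, y) \<in> set out. y = f x)} \<ge> 1 - \<delta>))"
proof (rule exI[of _ 1], intro conjI allI impI)
  fix n :: nat and lab :: "nat \<Rightarrow> 'x \<Rightarrow> int" and f :: "'x \<Rightarrow> int" and xs :: "'x list" and \<delta> :: real
  assume \<alpha>_pos: "frac_perfect n lab f > 0" and "distinct xs" "\<delta> > 0"
  define \<alpha> where "\<alpha> = frac_perfect n lab f"
  define k where "k = nat \<lceil>\<alpha> powr (-2) * ln (real (length xs) / \<delta>)\<rceil>"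
  have "1 - \<delta> \<le> measure_pmf.prob (draws n (set xs) k)
          {\<omega>. case prune_and_label lab \<alpha> k \<omega> xs of
                 None \<Rightarrow> True | Some out \<Rightarrow> (\<forall>(x, y) \<in> set out. y = f x)}"
  proof (cases "1 \<le> \<delta> \<or> xs = []")
    case True
    then show ?thesis
      using \<open>\<delta> > 0\<close> by (auto simp: measure_nonneg intro: order.trans[of _ 0])
  next
    case False
    then have "\<delta> < 1" "1 \<le> length xs"
      by (auto simp: Suc_le_eq)
    with \<alpha>_pos \<open>\<delta> > 0\<close> show ?thesis
      unfolding k_def \<alpha>_def
      by (intro prune_and_label_correct_prob \<open>distinct xs\<close> sample_size_sufficient
          frac_perfect_pos_imp_pos ballI frac_perfect_le_frac_correct)
  qed
  then show "let \<alpha> = frac_perfect n lab f;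
             k = nat \<lceil>1 * \<alpha> powr (-2) * ln (real (length xs) / \<delta>)\<rceil>
         in measure_pmf.prob (draws n (set xs) k)
              {\<omega>. case prune_and_label lab \<alpha> k \<omega> xs of
                     None \<Rightarrow> True
                   | Some out \<Rightarrow> (\<forall>(x, y) \<in> set out. y = f x)} \<ge> 1 - \<delta>"
    by (simp add: Let_def \<alpha>_def k_def)
qed simp

end
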